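(* Let $\gamma>1$ and $a>0$, and set $v_{1,1}=a$, $v_{2,1}=\gamma a$. Then there exist $b>0$ and $\vartheta\in(-\pi,\pi]$ such that, with $w_{1,1}=w_{2,1}=b$, one has $2\omega_-(\vartheta)=\omega_+(2\vartheta)$.
   Context: With $c_i:=2v_{i,1}+w_{i,1}$, for $\vartheta\in\mathbb R$ define $$\omega_\pm(\vartheta):=\sqrt{\tfrac12\Big(c_1+c_2\pm\sqrt{(c_1-c_2)^2+8v_{1,1}v_{2,1}(\cos\vartheta+1)}\Big)}.$$ (In the stated setting $w_{i,1}>0$, $4v_{i,1}+w_{i,1}>0$, $v_{1,1}v_{2,1}>0$, $c_2>c_1$, so both branches are positive.) *)

theory Defs
  imports Complex_Main
begin

definition cc :: "real \<Rightarrow> real \<Rightarrow> real" where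
  "cc v w = 2 * v + w"

definition omega_plus :: "real \<Rightarrow> real \<Rightarrow> real \<Rightarrow> real \<Rightarrow> real \<Rightarrow> real" where
  "omega_plus v1 v2 w1 w2 \<theta> =
     sqrt ((cc v1 w1 + cc v2 w2
            + sqrt ((cc v1 w1 - cc v2 w2)^2 + 8 * v1 * v2 * (cos \<theta> + 1))) / 2)"

definition omega_minus :: "real \<Rightarrow> real \<Rightarrow> real \<Rightarrow> real \<Rightarrow> real \<Rightarrow> real" where
  "omega_minus v1 v2 w1 w2 \<theta> =
     sqrt ((cc v1 w1 + cc v2 w2
            - sqrt ((cc v1 w1 - cc v2 w2)^2 + 8 * v1 * v2 * (cos \<theta> + 1))) / 2)"

end

theory Submission
  imports Defs
begin

(* We take the angle theta = 0, so that also 2 * theta = 0, and equal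
   on-site weights w_{1,1} = w_{2,1} = b.  Then c_1 - c_2 = 2 (v_1 - v_2) and the
   discriminant (c_1 - c_2)^2 + 16 v_1 v_2 collapses to the perfect square
   (2 (v_1 + v_2))^2.  Consequently, for v_1 + v_2 >= 0,
       omega_-(0)^2 = b   and   omega_+(0)^2 = 2 (v_1 + v_2) + b,
   and the resonance condition 2 omega_-(0) = omega_+(0) becomes the linear equation
   4 b = 2 (v_1 + v_2) + b, i.e. b = 2 (v_1 + v_2) / 3.  The file first evaluates the
   discriminant and both branches at theta = 0 for arbitrary couplings v_1, v_2, then
   proves the resonance for this choice of b, and finally specialises to
   v_1 = a, v_2 = gamma * a, where b = 2 a (1 + gamma) / 3 > 0. *)

lemma discriminant_at_zero:
  fixes v1 v2 b :: real
  shows "sqrt ((cc v1 b - cc v2 b)^2 + 8 * v1 * v2 * (cos 0 + 1)) = 2 * \<bar>v1 + v2\<bar>"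
proof -
  have "(cc v1 b - cc v2 b)^2 + 8 * v1 * v2 * (cos 0 + 1) = (2 * (v1 + v2))^2"
    unfolding cc_def by (simp add: power2_eq_square algebra_simps)
  then show ?thesis
    by (simp only: real_sqrt_abs abs_mult)
qed

lemma omega_minus_at_zero:
  fixes v1 v2 b :: real
  assumes "v1 + v2 \<ge> 0"
  shows "omega_minus v1 v2 b b 0 = sqrt b"
  using assms unfolding omega_minus_def discriminant_at_zero
  by (simp add: cc_def algebra_simps)

lemma omega_plus_at_zero:
  fixes v1 v2 b :: real
  assumes "v1 + v2 \<ge> 0"
  shows "omega_plus v1 v2 b b 0 = sqrt (2 * (v1 + v2) + b)"
  using assms unfolding omega_plus_def discriminant_at_zero
  by (simp add: cc_def algebra_simps)

lemma resonance_at_zero: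
  fixes v1 v2 :: real
  assumes "v1 + v2 \<ge> 0"
  shows "2 * omega_minus v1 v2 (2 * (v1 + v2) / 3) (2 * (v1 + v2) / 3) 0
         = omega_plus v1 v2 (2 * (v1 + v2) / 3) (2 * (v1 + v2) / 3) 0"
proof -
  define b where "b = 2 * (v1 + v2) / 3"
  have "2 * (v1 + v2) + b = 4 * b"
    unfolding b_def by simp
  then have "sqrt (2 * (v1 + v2) + b) = 2 * sqrt b"
    by (simp add: real_sqrt_mult)
  then have "2 * omega_minus v1 v2 b b 0 = omega_plus v1 v2 b b 0"
    using assms by (simp add: omega_minus_at_zero omega_plus_at_zero)
  then show ?thesis
    unfolding b_def .
qed

theorem mainTheorem2:
  fixes \<gamma> a :: real
  assumes "\<gamma> > 1" and "a > 0"
  shows "\<exists>b \<theta>. b > 0 \<and> -pi < \<theta> \<and> \<theta> \<le> pi \<and>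
           2 * omega_minus a (\<gamma> * a) b b \<theta> = omega_plus a (\<gamma> * a) b b (2 * \<theta>)"
proof -
  define b where "b = 2 * (a + \<gamma> * a) / 3"
  have coupling_pos: "a + \<gamma> * a > 0"
    using assms by (simp add: add_pos_pos)
  then have "b > 0"
    unfolding b_def by simp
  moreover have "2 * omega_minus a (\<gamma> * a) b b 0 = omega_plus a (\<gamma> * a) b b (2 * 0)"
    using resonance_at_zero[of a "\<gamma> * a"] coupling_pos unfolding b_def by simp
  ultimately show ?thesis
    by (intro exI[of _ b] exI[of _ 0]) simp
qed

end
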